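(* Let $F$ be a rooted forest-tuple and $m\in\mathbb{N}$. If $a(F)<m/3$ and $m\ge e(F)$, then $F$ is $m$-suitable.
   Context: A rooted forest is a forest each of whose components contains exactly one designated root. A rooted forest-tuple is a tuple $F=(F_1,\ldots,F_\ell)$ of pairwise vertex-disjoint rooted forests with $e(F_i)>0$ for some $i$; $e(F)=\sum_i e(F_i)$. Define $a(F)=\max_i e(F_i)$, $k(F)=|\{i: e(F_i)=a(F)\}|$, $t(F)=|\{i: e(F_i)>0\}|$. $F$ is suitable if $3a(F)+k(F)-e(F)\le 2$, or if $a(F)=1$ and $t(F)\ge 4$. A rooted forest-tuple $F=(F_1,\dots,F_\ell)$ is a valid subforest of a rooted forest-tuple $G=(G_1,\dots,G_{\ell''})$ if $\ell\le\ell''$, $F_i\subseteq G_i$ for every $i\in[\ell]$, and every root of $F_i$ is a root of $G_i$. $F$ is $m$-suitable if it is a valid subforest of some suitable rooted forest-tuple $G$ with $e(G)=m$. *)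

theory Defs
  imports Complex_Main
begin

text \<open>A rooted forest on vertex type nat is represented as a triple (V, E, R):
  a finite vertex set V, a set E of edges (two-element subsets of V), and a set R of roots.\<close>

type_synonym rforest = "nat set \<times> nat set set \<times> nat set"

definition verts :: "rforest \<Rightarrow> nat set" where "verts F = fst F"
definition edges :: "rforest \<Rightarrow> nat set set" where "edges F = fst (snd F)"
definition roots :: "rforest \<Rightarrow> nat set" where "roots F = snd (snd F)"

definition has_cycle :: "nat set set \<Rightarrow> bool" where
  "has_cycle E \<longleftrightarrow> (\<exists>vs. length vs \<ge> 3 \<and> distinct vs \<and>
      (\<forall>i < length vs. {vs ! i, vs ! ((i + 1) mod length vs)} \<in> E))"

definition connected_in :: "nat set set \<Rightarrow> nat \<Rightarrow> nat \<Rightarrow> bool" where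
  "connected_in E u v \<longleftrightarrow> (u, v) \<in> {(x, y). {x, y} \<in> E}\<^sup>*"

definition is_forest :: "nat set \<Rightarrow> nat set set \<Rightarrow> bool" where
  "is_forest V E \<longleftrightarrow> finite V \<and> (\<forall>e \<in> E. card e = 2 \<and> e \<subseteq> V) \<and> \<not> has_cycle E"

definition rooted_forest :: "rforest \<Rightarrow> bool" where
  "rooted_forest F \<longleftrightarrow> is_forest (verts F) (edges F) \<and> roots F \<subseteq> verts F \<and>
     (\<forall>v \<in> verts F. \<exists>!r. r \<in> roots F \<and> connected_in (edges F) v r)"

definition ne :: "rforest \<Rightarrow> nat" where "ne F = card (edges F)"

definition eT :: "rforest list \<Rightarrow> nat" where "eT F = (\<Sum>i<length F. ne (F ! i))"

definition rooted_forest_tuple :: "rforest list \<Rightarrow> bool" where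
  "rooted_forest_tuple F \<longleftrightarrow> (\<forall>i < length F. rooted_forest (F ! i)) \<and>
     (\<forall>i < length F. \<forall>j < length F. i \<noteq> j \<longrightarrow> verts (F ! i) \<inter> verts (F ! j) = {}) \<and>
     (\<exists>i < length F. ne (F ! i) > 0)"

definition aT :: "rforest list \<Rightarrow> nat" where
  "aT F = Max {ne (F ! i) | i. i < length F}"

definition kT :: "rforest list \<Rightarrow> nat" where
  "kT F = card {i. i < length F \<and> ne (F ! i) = aT F}"

definition tT :: "rforest list \<Rightarrow> nat" where
  "tT F = card {i. i < length F \<and> ne (F ! i) > 0}"

definition suitable :: "rforest list \<Rightarrow> bool" where
  "suitable F \<longleftrightarrow> (3 * int (aT F) + int (kT F) - int (eT F) \<le> 2) \<or> (aT F = 1 \<and> tT F \<ge> 4)"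

definition valid_subforest :: "rforest list \<Rightarrow> rforest list \<Rightarrow> bool" where
  "valid_subforest F G \<longleftrightarrow> rooted_forest_tuple F \<and> rooted_forest_tuple G \<and> length F \<le> length G \<and>
     (\<forall>i < length F. verts (F ! i) \<subseteq> verts (G ! i) \<and> edges (F ! i) \<subseteq> edges (G ! i) \<and>
        roots (F ! i) \<subseteq> roots (G ! i))"

definition m_suitable :: "nat \<Rightarrow> rforest list \<Rightarrow> bool" where
  "m_suitable m F \<longleftrightarrow> (\<exists>G. valid_subforest F G \<and> suitable G \<and> eT G = m)"

end

theory Submission
  imports Defs
begin

text \<open>Pad \<open>F\<close> with \<open>m - e(F)\<close> single-edge forests on fresh vertices. The padded tuple \<open>G\<close>
  contains \<open>F\<close> as a valid subforest, has \<open>e(G) = m\<close> and, since \<open>a(F) \<ge> 1\<close>, still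
  \<open>a(G) = a(F) < m/3\<close>. Every tuple with \<open>3a < e\<close> is suitable: if \<open>a = 1\<close> then \<open>t = e > 3\<close>,
  and if \<open>a \<ge> 2\<close> then \<open>ka \<le> e\<close> gives \<open>3a + k \<le> e + 2\<close>.\<close>

lemma eT_conv_sum_list: "eT F = sum_list (map ne F)"
  unfolding eT_def by (simp add: sum_list_sum_nth atLeast0LessThan)

lemma eT_append: "eT (F @ H) = eT F + eT H"
  by (simp add: eT_conv_sum_list)

lemma aT_conv_Max: "aT F = Max (ne ` set F)"
proof -
  have "{ne (F ! i) | i. i < length F} = ne ` set F"
    by (auto simp: set_conv_nth)
  then show ?thesis
    unfolding aT_def by simp
qed

lemma ne_le_aT: "f \<in> set F \<Longrightarrow> ne f \<le> aT F"
  by (simp add: aT_conv_Max)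

lemma kT_mult_aT_le_eT: "kT F * aT F \<le> eT F"
proof -
  let ?K = "{i. i < length F \<and> ne (F ! i) = aT F}"
  have "kT F * aT F = (\<Sum>i\<in>?K. ne (F ! i))"
    unfolding kT_def by simp
  also have "\<dots> \<le> (\<Sum>i<length F. ne (F ! i))"
    by (rule sum_mono2) auto
  finally show ?thesis
    unfolding eT_def .
qed

lemma eT_le_aT_mult_tT: "eT F \<le> aT F * tT F"
proof -
  let ?T = "{i. i < length F \<and> ne (F ! i) > 0}"
  have "eT F = (\<Sum>i\<in>?T. ne (F ! i))"
    unfolding eT_def by (rule sum.mono_neutral_right) auto
  also have "\<dots> \<le> (\<Sum>i\<in>?T. aT F)"
    by (rule sum_mono) (simp add: ne_le_aT)
  also have "\<dots> = aT F * tT F"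
    unfolding tT_def by simp
  finally show ?thesis .
qed

lemma suitable_if_three_aT_less_eT:
  assumes "3 * aT G < eT G"
  shows "suitable G"
proof (cases "aT G = 1")
  case True
  then have "4 \<le> tT G"
    using assms eT_le_aT_mult_tT[of G] by simp
  with True show ?thesis
    by (simp add: suitable_def)
next
  case False
  moreover have "aT G \<noteq> 0"
    using assms eT_le_aT_mult_tT[of G] by (cases "aT G = 0") auto
  ultimately have a2: "2 \<le> aT G"
    by simp
  have "3 * aT G + kT G \<le> eT G + 2"
  proof (cases "kT G \<le> 3")
    case True
    with assms show ?thesis
      by linarith
  next
    case False
    have "2 * (kT G - 3) \<le> aT G * (kT G - 3)"
      using a2 by simp
    moreover have "kT G * aT G = aT G * (kT G - 3) + 3 * aT G"
      using False by (simp add: algebra_simps diff_mult_distrib2)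
    ultimately show ?thesis
      using False kT_mult_aT_le_eT[of G] by linarith
  qed
  then show ?thesis
    by (simp add: suitable_def)
qed

lemma not_has_cycle_singleton: "\<not> has_cycle {e}"
proof
  assume "has_cycle {e}"
  then obtain vs where len: "3 \<le> length vs" and dist: "distinct vs"
    and cyc: "\<forall>i < length vs. {vs ! i, vs ! ((i + 1) mod length vs)} \<in> {e}"
    unfolding has_cycle_def by blast
  have succ: "(0 + 1) mod length vs = 1" "(1 + 1) mod length vs = 2" and "vs \<noteq> []"
    using len by auto
  have "{vs ! 0, vs ! 1} = e" "{vs ! 1, vs ! 2} = e"
    using cyc[rule_format, of 0] cyc[rule_format, of 1] len \<open>vs \<noteq> []\<close> unfolding succ by simp_all
  moreover have "vs ! 0 \<noteq> vs ! 1" "vs ! 0 \<noteq> vs ! 2"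
    using dist[unfolded distinct_conv_nth, rule_format, of 0 1]
      dist[unfolded distinct_conv_nth, rule_format, of 0 2] len by force+
  ultimately show False
    by (metis doubleton_eq_iff)
qed

lemma rooted_forest_single_edge:
  assumes "x \<noteq> y"
  shows "rooted_forest ({x, y}, {{x, y}}, {x})"
proof -
  have "connected_in {{x, y}} y x"
    unfolding connected_in_def by (rule r_into_rtrancl) (auto simp: insert_commute)
  moreover have "connected_in {{x, y}} x x"
    unfolding connected_in_def by simp
  ultimately show ?thesis
    using assms not_has_cycle_singleton
    unfolding rooted_forest_def is_forest_def verts_def edges_def roots_def by auto
qed

definition fresh_edge :: "nat \<Rightarrow> nat \<Rightarrow> rforest" where
  "fresh_edge N j = ({N + 2 * j, N + 2 * j + 1}, {{N + 2 * j, N + 2 * j + 1}}, {N + 2 * j})"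

lemma verts_fresh_edge: "verts (fresh_edge N j) = {N + 2 * j, N + 2 * j + 1}"
  by (simp add: fresh_edge_def verts_def)

lemma verts_fresh_edge_disjoint:
  "i \<noteq> j \<Longrightarrow> verts (fresh_edge N i) \<inter> verts (fresh_edge N j) = {}"
  by (auto simp: verts_fresh_edge)

lemma ne_fresh_edge [simp]: "ne (fresh_edge N j) = 1"
  by (simp add: fresh_edge_def ne_def edges_def)

lemma rooted_forest_fresh_edge: "rooted_forest (fresh_edge N j)"
  unfolding fresh_edge_def by (rule rooted_forest_single_edge) simp

lemma rooted_forest_tuple_append:
  assumes "rooted_forest_tuple F"
    and "\<forall>h \<in> set H. rooted_forest h"
    and "\<forall>i < length H. \<forall>j < length H. i \<noteq> j \<longrightarrow> verts (H ! i) \<inter> verts (H ! j) = {}"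
    and "\<forall>f \<in> set F. \<forall>h \<in> set H. verts f \<inter> verts h = {}"
  shows "rooted_forest_tuple (F @ H)"
  using assms unfolding rooted_forest_tuple_def
  by (auto simp: nth_append Int_commute dest: nth_mem)

lemma valid_subforest_append:
  "rooted_forest_tuple F \<Longrightarrow> rooted_forest_tuple (F @ H) \<Longrightarrow> valid_subforest F (F @ H)"
  by (simp add: valid_subforest_def nth_append)

lemma aT_append:
  assumes "F \<noteq> []" and "\<forall>h \<in> set H. ne h \<le> aT F"
  shows "aT (F @ H) = aT F"
proof (rule antisym)
  show "aT (F @ H) \<le> aT F"
    using assms unfolding aT_conv_Max[of "F @ H"] by (intro Max.boundedI) (auto simp: ne_le_aT)
  show "aT F \<le> aT (F @ H)"
    using assms(1) unfolding aT_conv_Max by (auto intro: Max_mono)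
qed

lemma aT_pos: "rooted_forest_tuple F \<Longrightarrow> 0 < aT F"
  unfolding rooted_forest_tuple_def by (auto dest!: nth_mem ne_le_aT)

lemma finite_verts_tuple:
  assumes "rooted_forest_tuple F"
  shows "finite (\<Union> (verts ` set F))"
proof -
  have "finite (verts f)" if "f \<in> set F" for f
    using assms that unfolding rooted_forest_tuple_def rooted_forest_def is_forest_def
    by (metis in_set_conv_nth)
  then show ?thesis
    by blast
qed

lemma ex_valid_superforest_eT_add:
  assumes F: "rooted_forest_tuple F"
  shows "\<exists>G. valid_subforest F G \<and> eT G = eT F + d \<and> aT G = aT F"
proof -
  obtain N where below: "\<forall>v \<in> \<Union> (verts ` set F). v < N"
    using finite_verts_tuple[OF F] finite_nat_set_iff_bounded by blast
  define H where "H = map (fresh_edge N) [0..<d]"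
  have fresh: "verts f \<inter> verts (fresh_edge N j) = {}" if "f \<in> set F" for f j
  proof -
    have "\<forall>v \<in> verts f. v < N"
      using below that by blast
    then show ?thesis
      by (auto simp: verts_fresh_edge)
  qed
  have "rooted_forest_tuple (F @ H)"
  proof (rule rooted_forest_tuple_append[OF F])
    show "\<forall>h \<in> set H. rooted_forest h"
      unfolding H_def by (auto simp: rooted_forest_fresh_edge)
    show "\<forall>i < length H. \<forall>j < length H. i \<noteq> j \<longrightarrow> verts (H ! i) \<inter> verts (H ! j) = {}"
      unfolding H_def by (simp add: verts_fresh_edge_disjoint)
    show "\<forall>f \<in> set F. \<forall>h \<in> set H. verts f \<inter> verts h = {}"
      unfolding H_def using fresh by auto
  qed
  moreover have "eT H = d"
    unfolding H_def eT_conv_sum_list by (simp add: comp_def sum_list_triv)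
  moreover have "aT (F @ H) = aT F"
    using aT_pos[OF F] F unfolding H_def rooted_forest_tuple_def
    by (intro aT_append) auto
  ultimately show ?thesis
    using F by (metis eT_append valid_subforest_append)
qed

theorem lemma3p9:
  fixes F :: "rforest list" and m :: nat
  assumes "rooted_forest_tuple F"
    and "real (aT F) < real m / 3"
    and "m \<ge> eT F"
  shows "m_suitable m F"
proof -
  obtain G where G: "valid_subforest F G" "eT G = m" "aT G = aT F"
    using ex_valid_superforest_eT_add[OF assms(1), of "m - eT F"] assms(3) by auto
  have "3 * aT G < eT G"
    using assms(2) G(2,3) by linarith
  then show ?thesis
    unfolding m_suitable_def using G suitable_if_three_aT_less_eT by blast
qed

end
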